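(* Fix $m\ge1$ and $n\ge0$. Every labelled sequent derivable in $\mathsf{Ldm}_{n}^{m}\mathsf{L}$ is valid.
   Context: Language. $Ag=\{1,\dots,m\}$, $Var$ a countable set of propositional variables; formulas of $\mathcal{L}^m$: $\phi ::= p \mid \overline{p} \mid (\phi\wedge\phi) \mid (\phi\vee\phi) \mid \Box\phi \mid \Diamond\phi \mid [i]\phi \mid \langle i\rangle\phi$. Models. An $\mathsf{Ldm}_{n}^{m}$-frame is $(W,\{\mathcal{R}_i\}_{i\in Ag})$ with $W\neq\emptyset$ and: (C1) each $\mathcal{R}_i$ is an equivalence relation on $W$; (C2) for all $u_1,\dots,u_m\in W$, $\bigcap_{i\in Ag}\mathcal{R}_i(u_i)\neq\emptyset$, where $\mathcal{R}_i(w)=\{v:(w,v)\in\mathcal{R}_i\}$; (C3) only if $n>0$: for each $i$ and all $w_0,\dots,w_n\in W$ there are $0\le k<j\le n$ with $(w_k,w_j)\in\mathcal{R}_i$. A model adds $V:Var\to\mathcal{P}(W)$. Satisfaction: $w\Vdash p$ iff $w\in V(p)$; $w\Vdash\overline{p}$ iff $w\notin V(p)$; $\wedge,\vee$ as usual; $\Box,\Diamond$ quantify over all of $W$; $[i],\langle i\rangle$ quantify (universally, existentially) over $\mathcal{R}_i(w)$. Labelled sequents $\mathcal{R},\Gamma$: $\mathcal{R}$ a multiset of relational atoms $\mathcal{R}_ixy$, $\Gamma$ a multiset of labelled formulas $x:\phi$. Given a model $M$ with domain $W$ and an interpretation $I$ mapping labels to worlds, $\mathcal{R},\Gamma$ is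 satisfied in $M$ under $I$ iff, if $(x^I,y^I)\in\mathcal{R}_i$ holds for all relational atoms $\mathcal{R}_ixy\in\mathcal{R}$, then $M,z^I\Vdash\phi$ for some $z:\phi\in\Gamma$. A sequent is valid iff it is satisfied in every $\mathsf{Ldm}_{n}^{m}$-model under every interpretation. Rules of $\mathsf{Ldm}_{n}^{m}\mathsf{L}$ (premise(s) / conclusion): $(\mathsf{id})$: / $\mathcal{R}, w:p, w:\overline{p},\Gamma$. $(\wedge)$: $\mathcal{R}, w:\phi\wedge\psi, w:\phi,\Gamma$ and $\mathcal{R}, w:\phi\wedge\psi, w:\psi,\Gamma$ / $\mathcal{R}, w:\phi\wedge\psi,\Gamma$. $(\vee)$: $\mathcal{R}, w:\phi\vee\psi, w:\phi, w:\psi,\Gamma$ / $\mathcal{R}, w:\phi\vee\psi,\Gamma$. $(\Box)$: $\mathcal{R}, w:\Box\phi, v:\phi,\Gamma$ / $\mathcal{R}, w:\Box\phi,\Gamma$ ($v$ fresh). $(\Diamond)$: $\mathcal{R}, w:\Diamond\phi, u:\phi,\Gamma$ / $\mathcal{R}, w:\Diamond\phi,\Gamma$. $(\mathsf{IOA})$: $\mathcal{R},\mathcal{R}_1u_1v,\dots,\mathcal{R}_mu_mv,\Gamma$ / $\mathcal{R},\Gamma$ ($v$ fresh). $([i])$: $\mathcal{R},\mathcal{R}_iwv, w:[i]\phi, v:\phi,\Gamma$ / $\mathcal{R}, w:[i]\phi,\Gamma$ ($v$ fresh). $(\mathsf{Pr}_i)$: $\mathcal{R}, w:\langle i\rangle\phi,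 u:\phi,\Gamma$ / $\mathcal{R}, w:\langle i\rangle\phi,\Gamma$, applicable only if $w=u$ or there are labels $w=z_0,\dots,z_k=u$ ($k\ge1$) with $\mathcal{R}_iz_lz_{l+1}\in\mathcal{R}$ or $\mathcal{R}_iz_{l+1}z_l\in\mathcal{R}$ for each $l<k$. $(\mathsf{APC}^i_n)$ (only if $n>0$): premises $\mathcal{R},\mathcal{R}_iw_kw_j,\Gamma$ for all $0\le k\le n-1$, $k+1\le j\le n$ / $\mathcal{R},\Gamma$. "Fresh" means not occurring in the conclusion. One copy of $([i])$, $(\mathsf{Pr}_i)$, $(\mathsf{APC}^i_n)$ for each $i\in Ag$. *)

theory Defs
  imports Main "HOL-Library.Multiset" "HOL-Library.Countable"
begin

text \<open>Formulas of L^m (negation normal form). Agents are natural numbers;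
  the agent set is Ag = {1..m}.\<close>

datatype 'v fm =
    Atom 'v
  | NAtom 'v
  | And "'v fm" "'v fm"
  | Or "'v fm" "'v fm"
  | Box "'v fm"
  | Dia "'v fm"
  | Stit nat "'v fm"
  | CStit nat "'v fm"

definition ldm_frame :: "nat \<Rightarrow> nat \<Rightarrow> 'w set \<Rightarrow> (nat \<Rightarrow> ('w \<times> 'w) set) \<Rightarrow> bool" where
  "ldm_frame m n W R \<longleftrightarrow>
     W \<noteq> {} \<and>
     (\<forall>i\<in>{1..m}. equiv W (R i)) \<and>
     (\<forall>u. (\<forall>i\<in>{1..m}. u i \<in> W) \<longrightarrow> (\<Inter>i\<in>{1..m}. R i `` {u i}) \<noteq> {}) \<and>
     (n > 0 \<longrightarrow> (\<forall>i\<in>{1..m}. \<forall>w. (\<forall>k\<le>n. w k \<in> W) \<longrightarrow>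
          (\<exists>k j. k < j \<and> j \<le> n \<and> (w k, w j) \<in> R i)))"

fun sat :: "'w set \<Rightarrow> (nat \<Rightarrow> ('w \<times> 'w) set) \<Rightarrow> ('v \<Rightarrow> 'w set) \<Rightarrow> 'w \<Rightarrow> 'v fm \<Rightarrow> bool" where
  "sat W R V w (Atom p) = (w \<in> V p)"
| "sat W R V w (NAtom p) = (w \<notin> V p)"
| "sat W R V w (And \<phi> \<psi>) = (sat W R V w \<phi> \<and> sat W R V w \<psi>)"
| "sat W R V w (Or \<phi> \<psi>) = (sat W R V w \<phi> \<or> sat W R V w \<psi>)"
| "sat W R V w (Box \<phi>) = (\<forall>v\<in>W. sat W R V v \<phi>)"
| "sat W R V w (Dia \<phi>) = (\<exists>v\<in>W. sat W R V v \<phi>)"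
| "sat W R V w (Stit i \<phi>) = (\<forall>v\<in>R i `` {w}. sat W R V v \<phi>)"
| "sat W R V w (CStit i \<phi>) = (\<exists>v\<in>R i `` {w}. sat W R V v \<phi>)"

text \<open>Labelled sequents: labels are nat; a relational atom R_i x y is (i, x, y).\<close>

type_synonym ratom = "nat \<times> nat \<times> nat"
type_synonym 'v lfm = "nat \<times> 'v fm"

definition seq_sat :: "'w set \<Rightarrow> (nat \<Rightarrow> ('w \<times> 'w) set) \<Rightarrow> ('v \<Rightarrow> 'w set) \<Rightarrow> (nat \<Rightarrow> 'w)
    \<Rightarrow> ratom multiset \<Rightarrow> 'v lfm multiset \<Rightarrow> bool" where
  "seq_sat W R V I Rs \<Gamma> \<longleftrightarrow>
     ((\<forall>(i, x, y) \<in> set_mset Rs. (I x, I y) \<in> R i) \<longrightarrow>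
      (\<exists>(z, \<phi>) \<in> set_mset \<Gamma>. sat W R V (I z) \<phi>))"

definition labels :: "ratom multiset \<Rightarrow> 'v lfm multiset \<Rightarrow> nat set" where
  "labels Rs \<Gamma> = (\<Union>(i, x, y) \<in> set_mset Rs. {x, y}) \<union> fst ` set_mset \<Gamma>"

definition connected :: "nat \<Rightarrow> ratom multiset \<Rightarrow> nat \<Rightarrow> nat \<Rightarrow> bool" where
  "connected i Rs w u \<longleftrightarrow>
     (w, u) \<in> ({(x, y). (i, x, y) \<in># Rs} \<union> {(y, x). (i, x, y) \<in># Rs})\<^sup>*"

inductive derivable :: "nat \<Rightarrow> nat \<Rightarrow> ratom multiset \<Rightarrow> 'v lfm multiset \<Rightarrow> bool"
  for m n :: nat where
  ax_id: "derivable m n Rs (add_mset (w, Atom p) (add_mset (w, NAtom p) \<Gamma>))"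
| r_and: "derivable m n Rs (add_mset (w, And \<phi> \<psi>) (add_mset (w, \<phi>) \<Gamma>)) \<Longrightarrow>
          derivable m n Rs (add_mset (w, And \<phi> \<psi>) (add_mset (w, \<psi>) \<Gamma>)) \<Longrightarrow>
          derivable m n Rs (add_mset (w, And \<phi> \<psi>) \<Gamma>)"
| r_or: "derivable m n Rs (add_mset (w, Or \<phi> \<psi>) (add_mset (w, \<phi>) (add_mset (w, \<psi>) \<Gamma>))) \<Longrightarrow>
         derivable m n Rs (add_mset (w, Or \<phi> \<psi>) \<Gamma>)"
| r_box: "v \<notin> labels Rs (add_mset (w, Box \<phi>) \<Gamma>) \<Longrightarrow>
          derivable m n Rs (add_mset (w, Box \<phi>) (add_mset (v, \<phi>) \<Gamma>)) \<Longrightarrow>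
          derivable m n Rs (add_mset (w, Box \<phi>) \<Gamma>)"
| r_dia: "derivable m n Rs (add_mset (w, Dia \<phi>) (add_mset (u, \<phi>) \<Gamma>)) \<Longrightarrow>
          derivable m n Rs (add_mset (w, Dia \<phi>) \<Gamma>)"
| r_ioa: "v \<notin> labels Rs \<Gamma> \<Longrightarrow>
          derivable m n (Rs + mset (map (\<lambda>i. (i, u i, v)) [1..<Suc m])) \<Gamma> \<Longrightarrow>
          derivable m n Rs \<Gamma>"
| r_stit: "i \<in> {1..m} \<Longrightarrow> v \<notin> labels Rs (add_mset (w, Stit i \<phi>) \<Gamma>) \<Longrightarrow>
           derivable m n (add_mset (i, w, v) Rs) (add_mset (w, Stit i \<phi>) (add_mset (v, \<phi>) \<Gamma>)) \<Longrightarrow>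
           derivable m n Rs (add_mset (w, Stit i \<phi>) \<Gamma>)"
| r_pr: "i \<in> {1..m} \<Longrightarrow> connected i Rs w u \<Longrightarrow>
         derivable m n Rs (add_mset (w, CStit i \<phi>) (add_mset (u, \<phi>) \<Gamma>)) \<Longrightarrow>
         derivable m n Rs (add_mset (w, CStit i \<phi>) \<Gamma>)"
| r_apc: "n > 0 \<Longrightarrow> i \<in> {1..m} \<Longrightarrow>
          (\<And>k j. k < j \<Longrightarrow> j \<le> n \<Longrightarrow> derivable m n (add_mset (i, ws k, ws j) Rs) \<Gamma>) \<Longrightarrow>
          derivable m n Rs \<Gamma>"

end

theory Submission
  imports Defs
begin

text \<open>Soundness is shown rule by rule: each rule preserves validity in a fixed model, i.e.
  satisfaction of the sequent under every interpretation of the labels into the frame. For the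
  rules with a fresh label v, the interpretation is redirected at v to a suitable world (a
  counter-witness for \<open>\<Box>\<close> and [i], a common member of the choice cells of the u i, which
  exists by independence of agents (C2), for IOA); freshness guarantees that this does not
  change the truth of the rest of the sequent. Pr_i is sound because each R_i is an
  equivalence relation, and APC_n^i because (C3) makes the new atom of one premise true.\<close>

definition valid_in :: "'w set \<Rightarrow> (nat \<Rightarrow> ('w \<times> 'w) set) \<Rightarrow> ('v \<Rightarrow> 'w set)
    \<Rightarrow> ratom multiset \<Rightarrow> 'v lfm multiset \<Rightarrow> bool" where
  "valid_in W R V Rs \<Gamma> \<longleftrightarrow> (\<forall>I. (\<forall>x. I x \<in> W) \<longrightarrow> seq_sat W R V I Rs \<Gamma>)"

lemma seq_sat_add_formula [simp]:
  "seq_sat W R V I Rs (add_mset (z, \<phi>) \<Gamma>) \<longleftrightarrow> sat W R V (I z) \<phi> \<or> seq_sat W R V I Rs \<Gamma>"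
  unfolding seq_sat_def by auto

lemma seq_sat_add_atom [simp]:
  "seq_sat W R V I (add_mset (i, x, y) Rs) \<Gamma> \<longleftrightarrow>
     ((I x, I y) \<in> R i \<longrightarrow> seq_sat W R V I Rs \<Gamma>)"
  unfolding seq_sat_def by auto

lemma seq_sat_union_atoms:
  "seq_sat W R V I (Rs + Rs') \<Gamma> \<longleftrightarrow>
     ((\<forall>(i, x, y) \<in># Rs'. (I x, I y) \<in> R i) \<longrightarrow> seq_sat W R V I Rs \<Gamma>)"
  unfolding seq_sat_def by (auto simp: ball_Un)

lemma labels_add_formula [simp]:
  "labels Rs (add_mset (z, \<phi>) \<Gamma>) = insert z (labels Rs \<Gamma>)"
  unfolding labels_def by auto

lemma seq_sat_fun_upd_fresh:
  assumes "v \<notin> labels Rs \<Gamma>"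
  shows "seq_sat W R V (I(v := x)) Rs \<Gamma> \<longleftrightarrow> seq_sat W R V I Rs \<Gamma>"
proof -
  have "\<forall>(i, a, b) \<in># Rs. a \<noteq> v \<and> b \<noteq> v" and "\<forall>(z, \<phi>) \<in># \<Gamma>. z \<noteq> v"
    using assms unfolding labels_def by force+
  then have "(\<forall>(i, a, b) \<in># Rs. ((I(v := x)) a, (I(v := x)) b) \<in> R i) \<longleftrightarrow>
               (\<forall>(i, a, b) \<in># Rs. (I a, I b) \<in> R i)"
    and "(\<exists>(z, \<phi>) \<in># \<Gamma>. sat W R V ((I(v := x)) z) \<phi>) \<longleftrightarrow>
           (\<exists>(z, \<phi>) \<in># \<Gamma>. sat W R V (I z) \<phi>)"
    by fastforce+
  then show ?thesis unfolding seq_sat_def by simp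
qed

lemma valid_in_fun_upd:
  assumes "valid_in W R V Rs \<Gamma>" and "\<forall>y. I y \<in> W" and "x \<in> W"
  shows "seq_sat W R V (I(v := x)) Rs \<Gamma>"
  using assms unfolding valid_in_def by simp

lemma connected_imp_rel:
  assumes "equiv W (R i)" and "I w \<in> W"
    and "\<forall>(j, a, b) \<in># Rs. (I a, I b) \<in> R j"
    and "connected i Rs w u"
  shows "(I w, I u) \<in> R i"
proof -
  from assms(1) have "sym (R i)" and "trans (R i)" by (auto elim: equivE)
  have "(w, u) \<in> ({(x, y). (i, x, y) \<in># Rs} \<union> {(y, x). (i, x, y) \<in># Rs})\<^sup>*"
    using assms(4) unfolding connected_def .
  then show ?thesis
  proof (induction rule: rtrancl_induct)
    case base
    show ?case using assms(1,2) equiv_class_self by fastforce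
  next
    case (step y z)
    then have "(I y, I z) \<in> R i \<or> (I z, I y) \<in> R i" using assms(3) by auto
    then have "(I y, I z) \<in> R i" using \<open>sym (R i)\<close> by (auto dest: symD)
    with step.IH show ?case using \<open>trans (R i)\<close> by (rule transD[rotated])
  qed
qed

lemma ldm_frame_equiv: "ldm_frame m n W R \<Longrightarrow> i \<in> {1..m} \<Longrightarrow> equiv W (R i)"
  unfolding ldm_frame_def by blast

lemma ldm_frame_choice_cells_meet:
  assumes "ldm_frame m n W R" and "m \<ge> 1" and "\<forall>i\<in>{1..m}. u i \<in> W"
  obtains x where "x \<in> W" and "\<forall>i\<in>{1..m}. (u i, x) \<in> R i"
proof -
  from assms(1,3) have "(\<Inter>i\<in>{1..m}. R i `` {u i}) \<noteq> {}"
    unfolding ldm_frame_def by blast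
  then obtain x where x: "\<forall>i\<in>{1..m}. (u i, x) \<in> R i" by blast
  have "1 \<in> {1..m}" using assms(2) by simp
  then have "x \<in> W"
    using x equiv_type[OF ldm_frame_equiv[OF assms(1)]] by blast
  then show thesis using x by (rule that)
qed

lemma ldm_frame_bounded_choices:
  assumes "ldm_frame m n W R" and "n > 0" and "i \<in> {1..m}" and "\<forall>k\<le>n. w k \<in> W"
  obtains k j where "k < j" and "j \<le> n" and "(w k, w j) \<in> R i"
proof -
  from assms have "\<exists>k j. k < j \<and> j \<le> n \<and> (w k, w j) \<in> R i"
    unfolding ldm_frame_def by blast
  with that show thesis by blast
qed

lemma valid_in_id_rule: "valid_in W R V Rs (add_mset (w, Atom p) (add_mset (w, NAtom p) \<Gamma>))"
  unfolding valid_in_def by simp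

lemma valid_in_and_rule:
  assumes "valid_in W R V Rs (add_mset (w, And \<phi> \<psi>) (add_mset (w, \<phi>) \<Gamma>))"
    and "valid_in W R V Rs (add_mset (w, And \<phi> \<psi>) (add_mset (w, \<psi>) \<Gamma>))"
  shows "valid_in W R V Rs (add_mset (w, And \<phi> \<psi>) \<Gamma>)"
  using assms unfolding valid_in_def by auto

lemma valid_in_or_rule:
  assumes "valid_in W R V Rs (add_mset (w, Or \<phi> \<psi>) (add_mset (w, \<phi>) (add_mset (w, \<psi>) \<Gamma>)))"
  shows "valid_in W R V Rs (add_mset (w, Or \<phi> \<psi>) \<Gamma>)"
  using assms unfolding valid_in_def by auto

lemma valid_in_dia_rule:
  assumes "valid_in W R V Rs (add_mset (w, Dia \<phi>) (add_mset (u, \<phi>) \<Gamma>))"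
  shows "valid_in W R V Rs (add_mset (w, Dia \<phi>) \<Gamma>)"
  using assms unfolding valid_in_def by auto

lemma valid_in_box_rule:
  assumes fresh: "v \<notin> labels Rs (add_mset (w, Box \<phi>) \<Gamma>)"
    and prem: "valid_in W R V Rs (add_mset (w, Box \<phi>) (add_mset (v, \<phi>) \<Gamma>))"
  shows "valid_in W R V Rs (add_mset (w, Box \<phi>) \<Gamma>)"
  unfolding valid_in_def
proof (intro allI impI)
  fix I :: "nat \<Rightarrow> _" assume I: "\<forall>y. I y \<in> W"
  show "seq_sat W R V I Rs (add_mset (w, Box \<phi>) \<Gamma>)"
  proof (cases "sat W R V (I w) (Box \<phi>)")
    case False
    then obtain x where "x \<in> W" and "\<not> sat W R V x \<phi>" by auto
    have "seq_sat W R V (I(v := x)) Rs (add_mset (w, Box \<phi>) (add_mset (v, \<phi>) \<Gamma>))"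
      by (rule valid_in_fun_upd[OF prem I \<open>x \<in> W\<close>])
    then have "seq_sat W R V (I(v := x)) Rs (add_mset (w, Box \<phi>) \<Gamma>)"
      using \<open>\<not> sat W R V x \<phi>\<close> by simp
    then show ?thesis by (simp only: seq_sat_fun_upd_fresh[OF fresh])
  qed simp
qed

lemma valid_in_stit_rule:
  assumes "equiv W (R i)"
    and fresh: "v \<notin> labels Rs (add_mset (w, Stit i \<phi>) \<Gamma>)"
    and prem: "valid_in W R V (add_mset (i, w, v) Rs) (add_mset (w, Stit i \<phi>) (add_mset (v, \<phi>) \<Gamma>))"
  shows "valid_in W R V Rs (add_mset (w, Stit i \<phi>) \<Gamma>)"
  unfolding valid_in_def
proof (intro allI impI)
  fix I :: "nat \<Rightarrow> _" assume I: "\<forall>y. I y \<in> W"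
  show "seq_sat W R V I Rs (add_mset (w, Stit i \<phi>) \<Gamma>)"
  proof (cases "sat W R V (I w) (Stit i \<phi>)")
    case False
    then obtain x where wx: "(I w, x) \<in> R i" and "\<not> sat W R V x \<phi>" by auto
    have "x \<in> W" using wx assms(1) by (auto dest: equiv_type)
    then have "seq_sat W R V (I(v := x)) (add_mset (i, w, v) Rs)
                 (add_mset (w, Stit i \<phi>) (add_mset (v, \<phi>) \<Gamma>))"
      by (rule valid_in_fun_upd[OF prem I])
    moreover have "v \<noteq> w" using fresh by auto
    ultimately have "seq_sat W R V (I(v := x)) Rs (add_mset (w, Stit i \<phi>) \<Gamma>)"
      using wx \<open>\<not> sat W R V x \<phi>\<close> by simp
    then show ?thesis by (simp only: seq_sat_fun_upd_fresh[OF fresh])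
  qed simp
qed

lemma valid_in_ioa_rule:
  assumes frame: "ldm_frame m n W R" and "m \<ge> 1"
    and fresh: "v \<notin> labels Rs \<Gamma>"
    and prem: "valid_in W R V (Rs + mset (map (\<lambda>i. (i, u i, v)) [1..<Suc m])) \<Gamma>"
  shows "valid_in W R V Rs \<Gamma>"
  unfolding valid_in_def
proof (intro allI impI)
  fix I :: "nat \<Rightarrow> _" assume I: "\<forall>y. I y \<in> W"
  obtain x where "x \<in> W" and x: "\<forall>i\<in>{1..m}. (I (u i), x) \<in> R i"
    using ldm_frame_choice_cells_meet[OF frame \<open>m \<ge> 1\<close>, of "\<lambda>i. I (u i)"] I by blast
  have "((I(v := x)) (u i), (I(v := x)) v) \<in> R i" if "i \<in> {1..m}" for i
  proof (cases "u i = v")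
    case True
    \<comment> \<open>the new atom is then (i, v, v), which holds by reflexivity at x\<close>
    then show ?thesis using equiv_class_self[OF ldm_frame_equiv[OF frame that] \<open>x \<in> W\<close>] by simp
  next
    case False
    then show ?thesis using x that by simp
  qed
  then have "\<forall>(i, a, b) \<in># mset (map (\<lambda>i. (i, u i, v)) [1..<Suc m]).
              ((I(v := x)) a, (I(v := x)) b) \<in> R i"
    by (auto simp del: fun_upd_apply)
  moreover have "seq_sat W R V (I(v := x)) (Rs + mset (map (\<lambda>i. (i, u i, v)) [1..<Suc m])) \<Gamma>"
    by (rule valid_in_fun_upd[OF prem I \<open>x \<in> W\<close>])
  ultimately have "seq_sat W R V (I(v := x)) Rs \<Gamma>"
    unfolding seq_sat_union_atoms by blast
  then show "seq_sat W R V I Rs \<Gamma>" by (simp only: seq_sat_fun_upd_fresh[OF fresh])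
qed

lemma valid_in_pr_rule:
  assumes "equiv W (R i)" and "connected i Rs w u"
    and "valid_in W R V Rs (add_mset (w, CStit i \<phi>) (add_mset (u, \<phi>) \<Gamma>))"
  shows "valid_in W R V Rs (add_mset (w, CStit i \<phi>) \<Gamma>)"
  using assms connected_imp_rel[of W R i _ w Rs u] unfolding valid_in_def seq_sat_def by fastforce

lemma valid_in_apc_rule:
  assumes "ldm_frame m n W R" and "n > 0" and "i \<in> {1..m}"
    and "\<And>k j. k < j \<Longrightarrow> j \<le> n \<Longrightarrow> valid_in W R V (add_mset (i, ws k, ws j) Rs) \<Gamma>"
  shows "valid_in W R V Rs \<Gamma>"
  unfolding valid_in_def
proof (intro allI impI)
  fix I :: "nat \<Rightarrow> _" assume I: "\<forall>y. I y \<in> W"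
  then obtain k j where "k < j" "j \<le> n" "(I (ws k), I (ws j)) \<in> R i"
    using ldm_frame_bounded_choices[OF assms(1-3), of "\<lambda>k. I (ws k)"] by blast
  with assms(4) I show "seq_sat W R V I Rs \<Gamma>" unfolding valid_in_def by auto
qed

theorem theorem4:
  fixes m n :: nat
    and Rs :: "ratom multiset" and \<Gamma> :: "('v::countable) lfm multiset"
    and W :: "'w set" and R :: "nat \<Rightarrow> ('w \<times> 'w) set"
    and V :: "'v \<Rightarrow> 'w set" and I :: "nat \<Rightarrow> 'w"
  assumes "m \<ge> 1"
    and "derivable m n Rs \<Gamma>"
    and "ldm_frame m n W R"
    and "\<forall>x. I x \<in> W"
  shows "seq_sat W R V I Rs \<Gamma>"
proof -
  have "valid_in W R V Rs \<Gamma>"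
    using assms(2)
  proof (induction rule: derivable.induct)
    case ax_id show ?case by (rule valid_in_id_rule)
  next
    case r_and show ?case using r_and.IH by (rule valid_in_and_rule)
  next
    case r_or show ?case using r_or.IH by (rule valid_in_or_rule)
  next
    case r_box show ?case using r_box.hyps(1) r_box.IH by (rule valid_in_box_rule)
  next
    case r_dia show ?case using r_dia.IH by (rule valid_in_dia_rule)
  next
    case r_ioa show ?case using r_ioa.hyps(1) r_ioa.IH by (rule valid_in_ioa_rule[OF assms(3,1)])
  next
    case r_stit show ?case
      using ldm_frame_equiv[OF assms(3) r_stit.hyps(1)] r_stit.hyps(2) r_stit.IH
      by (rule valid_in_stit_rule)
  next
    case r_pr show ?case
      using ldm_frame_equiv[OF assms(3) r_pr.hyps(1)] r_pr.hyps(2) r_pr.IH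
      by (rule valid_in_pr_rule)
  next
    case r_apc show ?case using r_apc.hyps(1,2) r_apc.IH by (rule valid_in_apc_rule[OF assms(3)])
  qed
  with assms(4) show ?thesis unfolding valid_in_def by blast
qed

end
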